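(* Let $D$ be an integral domain with quotient field $K$ and $n\ge1$. Let $$\mathrm{Int}_K(M_n(D))=\{f\in K[x]\mid f(C)\in M_n(D)\ \forall C\in M_n(D)\},$$ $$\mathrm{Int}_K[M_n(D)]=\{f\in (M_n(K))[x]\mid f(C)\in M_n(D)\ \forall C\in M_n(D)\}.$$ Identify $(M_n(K))[x]$ with $M_n(K[x])$ via the ring isomorphism $\varphi\big(\sum_k (a^{(k)}_{ij})_{i,j}\,x^k\big)=\big(\sum_k a^{(k)}_{ij}x^k\big)_{i,j}$. Then $\varphi(\mathrm{Int}_K[M_n(D)])=M_n(\mathrm{Int}_K(M_n(D)))$.
   Context: For $f=\sum_k A_k x^k\in (M_n(K))[x]$ and $C\in M_n(D)$, $f(C)=\sum_k A_kC^k$ (coefficients written on the left). $\mathrm{Int}_K[M_n(D)]$ is a ring (closed under multiplication) lying between $(M_n(D))[x]$ and $(M_n(K))[x]$. *)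

theory Defs
  imports "HOL-Analysis.Analysis" "HOL-Computational_Algebra.Fraction_Field"
    "HOL-Computational_Algebra.Polynomial"
begin

text \<open>D is an integral domain (a type of class idom), K = 'a fract its quotient field,
  D embedded in K via d \<mapsto> Fract d 1.  n x n matrices are 'b^'n^'n with 'n a finite type
  (so n = CARD('n) \<ge> 1).\<close>

definition matpow :: "'b::semiring_1^'n::finite^'n \<Rightarrow> nat \<Rightarrow> 'b^'n^'n" where
  "matpow C k = (((**) C) ^^ k) (mat 1)"

definition Dmats :: "('a::idom fract^'n^'n) set" where
  "Dmats = {C. \<forall>i j. C $ i $ j \<in> range (\<lambda>d. Fract d 1)}"

definition eval_scalar_poly :: "'b::field poly \<Rightarrow> 'b^'n^'n \<Rightarrow> 'b^'n^'n" where
  "eval_scalar_poly f C = (\<Sum>k\<le>degree f. mat (coeff f k) ** matpow C k) "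

definition eval_mat_poly :: "('b::field^'n^'n) poly \<Rightarrow> 'b^'n^'n \<Rightarrow> 'b^'n^'n" where
  "eval_mat_poly f C = (\<Sum>k\<le>degree f. coeff f k ** matpow C k)"

definition IntK_Mn :: "'n::finite itself \<Rightarrow> 'a::idom fract poly set" where
  "IntK_Mn _ = {f. \<forall>C::'a fract^'n^'n. C \<in> Dmats \<longrightarrow> eval_scalar_poly f C \<in> Dmats}"

definition IntK_bracket_Mn :: "('a::idom fract^'n^'n) poly set" where
  "IntK_bracket_Mn = {f. \<forall>C. C \<in> Dmats \<longrightarrow> eval_mat_poly f C \<in> Dmats}"

definition phi :: "('b::zero^'n^'n) poly \<Rightarrow> ('b poly)^'n^'n" where
  "phi f = (\<chi> i j. Poly (map (\<lambda>k. coeff f k $ i $ j) [0..<Suc (degree f)]))"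

end

theory Submission imports Defs begin

(* For f = \<Sum>k A_k x^k in M_n(K)[x] and a matrix X put
     twisted_eval f X C = \<Sum>k A_k X C^k,
   so that f(C) = twisted_eval f 1 C.  Writing f_ab = (phi f)_ab \<in> K[x] for the entries of f,
   the (a,j) entry of twisted_eval f X C is  \<Sum>b,c X_bc (f_ab(C))_cj.  Hence
     (1) f(C)_aj = \<Sum>b (f_ab(C))_bj, which gives "\<supseteq>" (all entries integer-valued \<Rightarrow> f is), and
     (2) (twisted_eval f E_bc C)_aj = (f_ab(C))_cj for the matrix unit E_bc.
   For "\<subseteq>" it therefore suffices that twisted_eval f E_bc C \<in> M_n(D) whenever f \<in> Int_K[M_n(D)]
   and C \<in> M_n(D).  The key identity is f(U C U\<inverse>) U = twisted_eval f U C, so twisted_eval f U C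
   is integral for every U \<in> GL_n(D).  For b \<noteq> c, E_bc = (1 + E_bc) - 1 is a difference of such
   units; for b = c (and n \<ge> 2) one moves E_bb = E_bv P to the off-diagonal case, where P is the
   transposition matrix of b and some v \<noteq> b, again by the key identity. *)

section \<open>The subring D of K and the matrices over it\<close>

definition inD :: "'a::idom fract \<Rightarrow> bool" where
  "inD x \<longleftrightarrow> x \<in> range (\<lambda>d. Fract d 1)"

lemma inD_0 [simp]: "inD 0"
  unfolding inD_def by (rule image_eqI[of _ _ 0]) (auto simp: Zero_fract_def)

lemma inD_1 [simp]: "inD 1"
  unfolding inD_def by (rule image_eqI[of _ _ 1]) (auto simp: One_fract_def)

lemma inD_add [intro]: "inD x \<Longrightarrow> inD y \<Longrightarrow> inD (x + y)"
  unfolding inD_def by (auto intro!: image_eqI[of _ _ "_ + _"])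

lemma inD_mult [intro]: "inD x \<Longrightarrow> inD y \<Longrightarrow> inD (x * y)"
  unfolding inD_def by (auto intro!: image_eqI[of _ _ "_ * _"])

lemma inD_diff [intro]: "inD x \<Longrightarrow> inD y \<Longrightarrow> inD (x - y)"
  unfolding inD_def by (auto intro!: image_eqI[of _ _ "_ - _"])

lemma inD_sum [intro]: "(\<And>i. i \<in> A \<Longrightarrow> inD (f i)) \<Longrightarrow> inD (sum f A)"
  by (induction A rule: infinite_finite_induct) auto

lemma Dmats_iff: "C \<in> Dmats \<longleftrightarrow> (\<forall>i j. inD (C $ i $ j))"
  unfolding Dmats_def inD_def by auto

lemma Dmats_add: "A \<in> Dmats \<Longrightarrow> B \<in> Dmats \<Longrightarrow> A + B \<in> Dmats"
  by (auto simp: Dmats_iff)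

lemma Dmats_diff: "A \<in> Dmats \<Longrightarrow> B \<in> Dmats \<Longrightarrow> A - B \<in> Dmats"
  by (auto simp: Dmats_iff)

lemma Dmats_mult: "A \<in> Dmats \<Longrightarrow> B \<in> Dmats \<Longrightarrow> A ** B \<in> Dmats"
  unfolding Dmats_iff matrix_matrix_mult_def by (simp add: inD_sum inD_mult)

lemma Dmats_mat1: "mat 1 \<in> Dmats"
  by (auto simp: Dmats_iff mat_def)

section \<open>Matrix algebra\<close>

lemma matrix_add_rdistrib: "(B + C) ** A = B ** A + C ** (A :: 'b::semiring_1^'n^'n)"
  by (vector matrix_matrix_mult_def sum.distrib[symmetric] field_simps)

lemma matrix_diff_ldistrib: "A ** (B - C) = A ** B - A ** (C :: 'b::ring_1^'n^'n)"
  by (simp add: vec_eq_iff matrix_matrix_mult_def sum_subtractf[symmetric] right_diff_distrib)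

lemma matrix_diff_rdistrib: "(B - C) ** A = B ** A - C ** (A :: 'b::ring_1^'n^'n)"
  by (simp add: vec_eq_iff matrix_matrix_mult_def sum_subtractf[symmetric] left_diff_distrib)

lemma matrix_sum_rmult: "sum f S ** (B :: 'b::semiring_1^'n^'n) = (\<Sum>k\<in>S. f k ** B)"
  by (induction S rule: infinite_finite_induct) (auto simp: matrix_add_rdistrib)

lemma matpow_Suc: "matpow C (Suc k) = C ** matpow C k"
  by (simp add: matpow_def)

lemma matpow_conj:
  fixes U U' C :: "'b::semiring_1^'n^'n"
  assumes "U ** U' = mat 1" "U' ** U = mat 1"
  shows "matpow (U ** C ** U') k = U ** matpow C k ** U'"
proof (induction k)
  case 0
  show ?case using assms by (simp add: matpow_def)
next
  case (Suc k)
  have "matpow (U ** C ** U') (Suc k) = U ** C ** (U' ** U) ** matpow C k ** U'"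
    by (simp add: matpow_Suc Suc matrix_mul_assoc)
  also have "\<dots> = U ** matpow C (Suc k) ** U'"
    using assms by (simp add: matpow_Suc matrix_mul_assoc)
  finally show ?case .
qed

lemma mat_mult_entry: "(mat c ** (M :: 'b::semiring_1^'n^'n)) $ i $ j = c * M $ i $ j"
  unfolding matrix_matrix_mult_def mat_def
  by (auto simp: if_distrib if_distribR sum.delta'[OF finite] cong: if_cong)

definition Emat :: "'n \<Rightarrow> 'n \<Rightarrow> 'b::semiring_1^'n::finite^'n" where
  "Emat b c = (\<chi> i j. if i = b \<and> j = c then 1 else 0)"

definition perm_mat :: "('n \<Rightarrow> 'n) \<Rightarrow> 'b::semiring_1^'n::finite^'n" where
  "perm_mat t = (\<chi> i j. if j = t i then 1 else 0)"

lemma Emat_sandwich_entry: "(X ** Emat b c ** (Y :: 'b::semiring_1^'n^'n)) $ a $ j = X $ a $ b * Y $ c $ j"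
proof -
  have XE: "(X ** Emat b c) $ a $ k = (if k = c then X $ a $ b else 0)" for k
    unfolding matrix_matrix_mult_def Emat_def
    by (auto simp: if_distrib if_distribR sum.delta'[OF finite] cong: if_cong)
  show ?thesis
    by (subst matrix_matrix_mult_def) (simp add: XE if_distrib if_distribR sum.delta'[OF finite] cong: if_cong)
qed

text \<open>Off the diagonal a matrix unit squares to zero, so 1 + E_bc is invertible with inverse 1 - E_bc.\<close>

lemma Emat_square: "b \<noteq> c \<Longrightarrow> Emat b c ** Emat b c = (0 :: 'b::semiring_1^'n^'n)"
proof -
  assume "b \<noteq> c"
  then have "(mat 1 ** Emat b c ** Emat b c :: 'b^'n^'n) $ i $ j = 0" for i j
    by (subst Emat_sandwich_entry) (auto simp: Emat_def)
  then show ?thesis by (simp add: vec_eq_iff)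
qed

lemma Emat_perm_mat: "Emat b c ** perm_mat t = (Emat b (t c) :: 'b::semiring_1^'n^'n)"
proof -
  have "(mat 1 ** Emat b c ** perm_mat t :: 'b^'n^'n) $ i $ j = Emat b (t c) $ i $ j" for i j
    by (subst Emat_sandwich_entry) (simp add: mat_def Emat_def perm_mat_def)
  then show ?thesis by (simp add: vec_eq_iff)
qed

lemma perm_mat_mult_entry: "(perm_mat t ** X) $ i $ j = X $ t i $ (j :: 'n)"
  for X :: "'b::semiring_1^'n::finite^'n"
  unfolding matrix_matrix_mult_def perm_mat_def
  by (auto simp: if_distrib if_distribR sum.delta'[OF finite] cong: if_cong)

lemma perm_mat_involution:
  assumes "\<And>i. t (t i) = i"
  shows "perm_mat t ** perm_mat t = (mat 1 :: 'b::semiring_1^'n::finite^'n)"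
proof -
  have "(perm_mat t ** perm_mat t :: 'b^'n^'n) $ i $ j = mat 1 $ i $ j" for i j
    unfolding perm_mat_mult_entry by (auto simp: perm_mat_def mat_def assms)
  then show ?thesis by (simp add: vec_eq_iff)
qed

lemma Dmats_Emat: "Emat b c \<in> Dmats"
  by (auto simp: Dmats_iff Emat_def)

lemma Dmats_perm_mat: "perm_mat t \<in> Dmats"
  by (auto simp: Dmats_iff perm_mat_def)

section \<open>The identification phi\<close>

lemma coeff_phi: "coeff (phi f $ i $ j) k = coeff f k $ i $ j"
  unfolding phi_def by (auto simp: nth_default_def coeff_eq_0 not_less simp del: upt_Suc)

lemma degree_phi: "degree (phi f $ i $ j) \<le> degree f"
  by (rule degree_le) (auto simp: coeff_phi coeff_eq_0)

lemma phi_surj: "\<exists>f. phi f = (M :: 'b::zero poly^'n::finite^'n)"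
proof
  define N where "N = Max (range (\<lambda>(i, j). degree (M $ i $ j)))"
  have degN: "degree (M $ i $ j) \<le> N" for i j
    unfolding N_def by (rule Max_ge) (auto intro!: image_eqI[of _ _ "(i, j)"])
  define f where "f = Poly (map (\<lambda>k. \<chi> i j. coeff (M $ i $ j) k) [0..<Suc N])"
  have coeff_f: "coeff f k = (\<chi> i j. coeff (M $ i $ j) k)" for k
  proof (cases "k \<le> N")
    case False
    then have "coeff (M $ i $ j) k = 0" for i j using degN[of i j] by (auto intro!: coeff_eq_0)
    then show ?thesis using False by (simp add: f_def nth_default_def vec_eq_iff del: upt_Suc)
  qed (simp add: f_def nth_default_def del: upt_Suc)
  show "phi f = M" by (simp add: vec_eq_iff poly_eq_iff coeff_phi coeff_f)
qed

section \<open>Twisted evaluation\<close>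

definition twisted_eval :: "('b::semiring_1^'n::finite^'n) poly \<Rightarrow> 'b^'n^'n \<Rightarrow> 'b^'n^'n \<Rightarrow> 'b^'n^'n" where
  "twisted_eval f X C = (\<Sum>k\<le>degree f. coeff f k ** X ** matpow C k)"

lemma eval_mat_poly_twisted: "eval_mat_poly f C = twisted_eval f (mat 1) C"
  by (simp add: eval_mat_poly_def twisted_eval_def)

lemma twisted_eval_diff: "twisted_eval f (X - Y) C = twisted_eval f X C - twisted_eval f (Y :: 'b::ring_1^'n^'n) C"
  by (simp add: twisted_eval_def matrix_diff_ldistrib matrix_diff_rdistrib sum_subtractf)

lemma twisted_eval_conj:
  fixes U U' :: "'b::semiring_1^'n::finite^'n"
  assumes "U ** U' = mat 1" "U' ** U = mat 1"
  shows "twisted_eval f X (U ** C ** U') ** U = twisted_eval f (X ** U) C"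
proof -
  have "coeff f k ** X ** matpow (U ** C ** U') k ** U
        = coeff f k ** (X ** U) ** matpow C k ** (U' ** U)" for k
    by (simp add: matpow_conj[OF assms] matrix_mul_assoc)
  then show ?thesis by (simp add: twisted_eval_def matrix_sum_rmult assms(2))
qed

lemma eval_scalar_phi_entry:
  "eval_scalar_poly (phi f $ a $ b) C $ c $ j = (\<Sum>k\<le>degree f. coeff f k $ a $ b * matpow C k $ c $ j)"
proof -
  have "eval_scalar_poly (phi f $ a $ b) C = (\<Sum>k\<le>degree f. mat (coeff (phi f $ a $ b) k) ** matpow C k)"
    unfolding eval_scalar_poly_def
    by (rule sum.mono_neutral_left) (auto simp: degree_phi coeff_eq_0)
  then show ?thesis by (simp add: mat_mult_entry coeff_phi)
qed

lemma twisted_eval_entry: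
  "twisted_eval f X C $ a $ j = (\<Sum>b\<in>UNIV. \<Sum>c\<in>UNIV. X $ b $ c * eval_scalar_poly (phi f $ a $ b) C $ c $ j)"
proof -
  have "twisted_eval f X C $ a $ j
        = (\<Sum>k\<le>degree f. \<Sum>c\<in>UNIV. \<Sum>b\<in>UNIV. coeff f k $ a $ b * X $ b $ c * matpow C k $ c $ j)"
    by (simp add: twisted_eval_def matrix_matrix_mult_def sum_distrib_right)
  also have "\<dots> = (\<Sum>c\<in>UNIV. \<Sum>b\<in>UNIV. \<Sum>k\<le>degree f. coeff f k $ a $ b * X $ b $ c * matpow C k $ c $ j)"
    by (simp add: sum.swap[where A = "{..degree f}"])
  also have "\<dots> = (\<Sum>b\<in>UNIV. \<Sum>c\<in>UNIV. X $ b $ c * eval_scalar_poly (phi f $ a $ b) C $ c $ j)"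
    by (subst sum.swap) (simp add: eval_scalar_phi_entry sum_distrib_left mult.assoc mult.left_commute)
  finally show ?thesis .
qed

lemma twisted_eval_Emat_entry:
  "twisted_eval f (Emat b c) C $ a $ j = eval_scalar_poly (phi f $ a $ b) C $ c $ j"
  by (simp add: twisted_eval_def Emat_sandwich_entry eval_scalar_phi_entry)

lemma eval_mat_poly_entry:
  "eval_mat_poly f C $ a $ j = (\<Sum>b\<in>UNIV. eval_scalar_poly (phi f $ a $ b) C $ b $ j)"
  by (simp add: eval_mat_poly_twisted twisted_eval_entry mat_def if_distrib if_distribR
      sum.delta[OF finite] cong: if_cong)

section \<open>Integrality of the twisted evaluations\<close>

text \<open>By the key identity, f(U C U\<inverse>) U = twisted_eval f U C, so twisting by a unit of M_n(D)
  keeps integer-valued polynomials integral.\<close>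

lemma twisted_eval_unit_Dmats:
  fixes f :: "('a::idom fract^'n::finite^'n) poly"
  assumes f: "f \<in> IntK_bracket_Mn" and C: "C \<in> Dmats" and U: "U \<in> Dmats" "U' \<in> Dmats"
    and inv: "U ** U' = mat 1" "U' ** U = mat 1"
  shows "twisted_eval f U C \<in> Dmats"
proof -
  have "eval_mat_poly f (U ** C ** U') \<in> Dmats"
    using f C U by (auto simp: IntK_bracket_Mn_def intro!: Dmats_mult)
  then have "twisted_eval f (mat 1) (U ** C ** U') ** U \<in> Dmats"
    using U(1) by (auto simp: eval_mat_poly_twisted intro: Dmats_mult)
  then show ?thesis by (simp add: twisted_eval_conj[OF inv])
qed

text \<open>Off the diagonal: E_bc = (1 + E_bc) - 1 is a difference of two units of M_n(D).\<close>

lemma twisted_eval_offdiag_Dmats: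
  fixes f :: "('a::idom fract^'n::finite^'n) poly"
  assumes f: "f \<in> IntK_bracket_Mn" and C: "C \<in> Dmats" and "b \<noteq> c"
  shows "twisted_eval f (Emat b c) C \<in> Dmats"
proof -
  let ?E = "Emat b c :: 'a fract^'n^'n"
  have EE: "?E ** ?E = 0" using \<open>b \<noteq> c\<close> by (rule Emat_square)
  have inv: "(mat 1 + ?E) ** (mat 1 - ?E) = mat 1" "(mat 1 - ?E) ** (mat 1 + ?E) = mat 1"
    by (simp_all add: matrix_add_ldistrib matrix_add_rdistrib matrix_diff_ldistrib
        matrix_diff_rdistrib EE)
  have "twisted_eval f (mat 1 + ?E) C \<in> Dmats"
    by (rule twisted_eval_unit_Dmats[OF f C _ _ inv])
      (auto intro: Dmats_add Dmats_diff Dmats_mat1 Dmats_Emat)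
  moreover have "twisted_eval f (mat 1) C \<in> Dmats"
    by (rule twisted_eval_unit_Dmats[OF f C Dmats_mat1 Dmats_mat1]) simp_all
  ultimately have "twisted_eval f (mat 1 + ?E - mat 1) C \<in> Dmats"
    by (simp only: twisted_eval_diff Dmats_diff)
  then show ?thesis by simp
qed

text \<open>On the diagonal (n \<ge> 2): E_bb = E_bv P for the transposition matrix P of b and v \<noteq> b,
  and conjugation by P reduces to the off-diagonal case; for n = 1, E_bb = 1.\<close>

lemma twisted_eval_Emat_Dmats:
  fixes f :: "('a::idom fract^'n::finite^'n) poly"
  assumes f: "f \<in> IntK_bracket_Mn" and C: "C \<in> Dmats"
  shows "twisted_eval f (Emat b c) C \<in> Dmats"
proof (cases "b = c")
  case False
  then show ?thesis by (rule twisted_eval_offdiag_Dmats[OF f C])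
next
  case diag: True
  show ?thesis
  proof (cases "\<exists>v::'n. v \<noteq> b")
    case False
    then have "(i = b \<and> j = c) = (i = j)" for i j :: 'n
      using diag by blast
    then have "Emat b c = (mat 1 :: 'a fract^'n^'n)"
      by (simp add: Emat_def mat_def vec_eq_iff)
    moreover have "eval_mat_poly f C \<in> Dmats"
      using f C by (simp add: IntK_bracket_Mn_def)
    ultimately show ?thesis by (simp add: eval_mat_poly_twisted)
  next
    case True
    then obtain v where "v \<noteq> b" by blast
    define t where "t i = (if i = b then v else if i = v then b else i)" for i
    define P :: "'a fract^'n^'n" where "P = perm_mat t"
    have PP: "P ** P = mat 1"
      unfolding P_def by (rule perm_mat_involution) (auto simp: t_def)
    have "t v = c"
      using \<open>v \<noteq> b\<close> diag by (simp add: t_def)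
    then have "Emat b c = Emat b v ** P"
      by (simp add: P_def Emat_perm_mat)
    then have "twisted_eval f (Emat b c) C = twisted_eval f (Emat b v) (P ** C ** P) ** P"
      by (simp add: twisted_eval_conj[OF PP PP])
    moreover have "P \<in> Dmats"
      by (simp add: P_def Dmats_perm_mat)
    moreover have "twisted_eval f (Emat b v) (P ** C ** P) \<in> Dmats"
      using \<open>P \<in> Dmats\<close> C \<open>v \<noteq> b\<close>
      by (intro twisted_eval_offdiag_Dmats[OF f] Dmats_mult) auto
    ultimately show ?thesis by (simp add: Dmats_mult)
  qed
qed

lemma IntK_bracket_Mn_iff_entries:
  fixes f :: "('a::idom fract^'n::finite^'n) poly"
  shows "f \<in> IntK_bracket_Mn \<longleftrightarrow> (\<forall>a b. phi f $ a $ b \<in> IntK_Mn TYPE('n))"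
proof
  assume f: "f \<in> IntK_bracket_Mn"
  show "\<forall>a b. phi f $ a $ b \<in> IntK_Mn TYPE('n)"
    using twisted_eval_Emat_Dmats[OF f]
    by (auto simp: IntK_Mn_def Dmats_iff twisted_eval_Emat_entry[symmetric])
next
  assume "\<forall>a b. phi f $ a $ b \<in> IntK_Mn TYPE('n)"
  then show "f \<in> IntK_bracket_Mn"
    by (auto simp: IntK_bracket_Mn_def IntK_Mn_def Dmats_iff eval_mat_poly_entry)
qed

theorem mainTheorem7:
  shows "phi ` (IntK_bracket_Mn :: ('a::idom fract^'n::finite^'n) poly set)
     = {M. \<forall>i j. M $ i $ j \<in> IntK_Mn TYPE('n)}"
proof (intro equalityI subsetI)
  fix M :: "'a fract poly^'n^'n"
  assume "M \<in> phi ` IntK_bracket_Mn"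
  then show "M \<in> {M. \<forall>i j. M $ i $ j \<in> IntK_Mn TYPE('n)}"
    using IntK_bracket_Mn_iff_entries by blast
next
  fix M :: "'a fract poly^'n^'n"
  assume M: "M \<in> {M. \<forall>i j. M $ i $ j \<in> IntK_Mn TYPE('n)}"
  obtain f :: "('a fract^'n^'n) poly" where "phi f = M"
    using phi_surj by blast
  with M show "M \<in> phi ` IntK_bracket_Mn"
    using IntK_bracket_Mn_iff_entries by blast
qed

end
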